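(* Let $\lambda\ge L_\varphi^2$ and for $t\ge1$ let $\widehat\varphi_{t,s'}=\varphi_{t,s'}-\sum_{s''\in\mathcal S_t}p_{t,s''}(\widehat\theta_{t+1})\varphi_{t,s''}$. Then (1) $\sum_{t=1}^T\max_{s'\in\mathcal S_t}\|\varphi_{t,s'}\|^2_{\Sigma_t^{-1}}\le\frac{2d}{\kappa}\log\big(1+\frac{T\mathcal UL_\varphi^2}{\lambda d}\big)$; (2) $\sum_{t=1}^T\sum_{s'\in\mathcal S_t}p_{t,s'}(\widehat\theta_{t+1})\|\widehat\varphi_{t,s'}\|^2_{\Sigma_t^{-1}}\le2d\log\big(1+\frac{T\mathcal UL_\varphi^2}{\lambda d}\big)$; (3) $\sum_{t=1}^T\max_{s'\in\mathcal S_t}\|\widehat\varphi_{t,s'}\|^2_{\Sigma_t^{-1}}\le\frac{8d}{\kappa}\log\big(1+\frac{T\mathcal UL_\varphi^2}{\lambda d}\big)$.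
   Context: MNL model: finite $\mathcal S,\mathcal A$, reachable sets $\mathcal S_{s,a}$, $\mathcal U=\max|\mathcal S_{s,a}|$, features $\varphi(s,a,s')\in\mathbb R^d$, $p(s'\mid s,a,\theta)=\exp(\varphi(s,a,s')^\top\theta)/\sum_{s''\in\mathcal S_{s,a}}\exp(\varphi(s,a,s'')^\top\theta)$, true $\theta^*$. Along a trajectory $(s_t,a_t)$: $\mathcal S_t=\mathcal S_{s_t,a_t}$, $\varphi_{t,s'}=\varphi(s_t,a_t,s')$, $p_{t,s'}(\theta)=p(s'\mid s_t,a_t,\theta)$. Assumptions: (A1) $\|\varphi\|_2\le L_\varphi$, $\|\theta^*\|_2\le L_\theta$, $\Theta=\{\|\theta\|_2\le L_\theta\}$; (A2) $\inf_{\theta\in\Theta}p_{t,s'}(\theta)p_{t,s''}(\theta)\ge\kappa\in(0,1)$ for all $t\in[T]$, $s',s''\in\mathcal S_t$; (A3) each $\mathcal S_{s,a}$ contains $s'$ with $\varphi(s,a,s')=0$. Estimator: $\ell_t(\theta)=-\sum_{s'\in\mathcal S_t}\mathbf 1\{s_{t+1}=s'\}\log p_{t,s'}(\theta)$; $\widehat\theta_1=0$, $\Sigma_t=\lambda I_d+\sum_{i<t}\nabla^2\ell_i(\widehat\theta_{i+1})$, $\widehat\Sigma_t=\Sigma_t+\eta\nabla^2\ell_t(\widehat\theta_t)$, $\widehat\theta_{t+1}=\arg\min_{\theta\in\Theta}\{\nabla\ell_t(\widehat\theta_t)^\top(\theta-\widehat\theta_t)+\frac1{2\eta}\|\theta-\widehat\theta_t\|^2_{\widehat\Sigma_t}\}$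 ($\eta>0$). *)

theory Defs
  imports "HOL-Analysis.Analysis"
begin

text \<open>MNL transition model.  Sr s a is the reachable set, phi s a s' the feature vector.\<close>

definition mnl_prob ::
  "('s \<Rightarrow> 'a \<Rightarrow> 's set) \<Rightarrow> ('s \<Rightarrow> 'a \<Rightarrow> 's \<Rightarrow> real^'d) \<Rightarrow> 's \<Rightarrow> 'a \<Rightarrow> real^'d \<Rightarrow> 's \<Rightarrow> real" where
  "mnl_prob Sr phi s a \<theta> s' =
     exp (phi s a s' \<bullet> \<theta>) / (\<Sum>s''\<in>Sr s a. exp (phi s a s'' \<bullet> \<theta>))"

definition Ucard :: "('s::finite \<Rightarrow> 'a::finite \<Rightarrow> 's set) \<Rightarrow> nat" where
  "Ucard Sr = Max {card (Sr s a) | s a. True}"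

definition mnl_loss ::
  "('s \<Rightarrow> 'a \<Rightarrow> 's set) \<Rightarrow> ('s \<Rightarrow> 'a \<Rightarrow> 's \<Rightarrow> real^'d) \<Rightarrow> (nat \<Rightarrow> 's) \<Rightarrow> (nat \<Rightarrow> 'a)
    \<Rightarrow> nat \<Rightarrow> real^'d \<Rightarrow> real" where
  "mnl_loss Sr phi st ac t \<theta> =
     - (\<Sum>s'\<in>Sr (st t) (ac t).
          (if st (Suc t) = s' then 1 else 0) * ln (mnl_prob Sr phi (st t) (ac t) \<theta> s'))"

definition grad :: "(real^'d \<Rightarrow> real) \<Rightarrow> real^'d \<Rightarrow> real^'d" where
  "grad f x = (SOME D. GDERIV f x :> D)"

definition hess :: "(real^'d \<Rightarrow> real) \<Rightarrow> real^'d \<Rightarrow> real^'d^'d" where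
  "hess f x = (SOME H. ((\<lambda>y. grad f y) has_derivative (\<lambda>h. H *v h)) (at x))"

definition wnorm2 :: "real^'d^'d \<Rightarrow> real^'d \<Rightarrow> real" where
  "wnorm2 A x = x \<bullet> (A *v x)"

text \<open>Online mirror descent estimator.  est k = (theta_hat_{k+1}, Sigma_{k+1}):
  theta_hat_1 = 0, Sigma_1 = lambda I,
  theta_hat_{t+1} = argmin over Theta of the OMD objective built from l_t ac theta_hat_t,
  Sigma_{t+1} = Sigma_t + hess l_t (theta_hat_{t+1}).\<close>
primrec mnl_est ::
  "('s \<Rightarrow> 'a \<Rightarrow> 's set) \<Rightarrow> ('s \<Rightarrow> 'a \<Rightarrow> 's \<Rightarrow> real^'d) \<Rightarrow> (nat \<Rightarrow> 's) \<Rightarrow> (nat \<Rightarrow> 'a)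
    \<Rightarrow> real \<Rightarrow> real \<Rightarrow> real \<Rightarrow> nat \<Rightarrow> (real^'d) \<times> (real^'d^'d)" where
  "mnl_est Sr phi st ac L\<theta> lam \<eta> 0 = (0, lam *\<^sub>R mat 1)"
| "mnl_est Sr phi st ac L\<theta> lam \<eta> (Suc k) =
     (let t = Suc k;
          \<theta>t = fst (mnl_est Sr phi st ac L\<theta> lam \<eta> k);
          \<Sigma>t = snd (mnl_est Sr phi st ac L\<theta> lam \<eta> k);
          lt = mnl_loss Sr phi st ac t;
          \<Sigma>hat = \<Sigma>t + \<eta> *\<^sub>R hess lt \<theta>t;
          g = grad lt \<theta>t;
          \<theta>new = arg_min_on (\<lambda>\<theta>. g \<bullet> (\<theta> - \<theta>t) + 1 / (2 * \<eta>) * wnorm2 \<Sigma>hat (\<theta> - \<theta>t))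
                    {\<theta>. norm \<theta> \<le> L\<theta>}
      in (\<theta>new, \<Sigma>t + hess lt \<theta>new))"

definition theta_hat where
  "theta_hat Sr phi st ac L\<theta> lam \<eta> t = fst (mnl_est Sr phi st ac L\<theta> lam \<eta> (t - 1))"

definition Sigma where
  "Sigma Sr phi st ac L\<theta> lam \<eta> t = snd (mnl_est Sr phi st ac L\<theta> lam \<eta> (t - 1))"

end

theory Submission
  imports Defs
begin

text \<open>Along the trajectory the design matrices grow by
  \<Sigma>_{t+1} = \<Sigma>_t + H_t, where H_t, the Hessian of the softmax log-loss at
  theta_hat_{t+1}, is the covariance of the features phi_{t,s} under the probabilities
  p_t = p(. | theta_hat_{t+1}); it does not depend on the observed next state.
  Writing H_t as the sum of the rank-one terms x x^T with x = sqrt(p_t(s)) (phi_{t,s} - mean)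
  turns (2) into the elliptical potential lemma: by the matrix determinant lemma,
  det \<Sigma>_{t+1} \<ge> det \<Sigma>_t (1 + z_t) with z_t the t-th summand of (2); since
  lambda \<ge> L^2 each z_t is at most 1, so z_t \<le> 2 ln (1 + z_t) and the sum telescopes to
  2 ln (det \<Sigma>_{T+1} / lambda^d), which Hadamard's inequality and AM-GM bound by
  2 d ln (1 + T L^2 / (lambda d)).

  For (1), assumptions A2 and A3 give H_t \<ge> kappa phi phi^T for every feature phi
  (compare phi with a zero feature), so comparison matrices V_t that receive only the updates
  kappa phi phi^T along the maximising features stay below \<Sigma>_t, and their elliptical
  potential bounds (1) after dividing by kappa.  (3) follows from (1) by
  |a - b|^2 \<le> 2 |a|^2 + 2 |b|^2 and Jensen's inequality for the mean feature.
  All three bounds already hold with U replaced by 1.\<close>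

section \<open>Outer products and positive definite matrices\<close>

definition outer :: "real^'n \<Rightarrow> real^'n \<Rightarrow> real^'n^'n" where
  "outer u v = (\<chi> i j. u$i * v$j)"

lemma outer_mult_vec: "outer u v *v x = (v \<bullet> x) *\<^sub>R u"
  by (simp add: outer_def matrix_vector_mult_def vec_eq_iff inner_vec_def sum_distrib_left mult_ac)

lemma matrix_mult_outer: "(A::real^'n^'n) ** outer u v = outer (A *v u) v"
  by (simp add: outer_def matrix_matrix_mult_def matrix_vector_mult_def vec_eq_iff sum_distrib_left mult_ac)

lemma outer_matrix_mult: "outer u v ** (B::real^'n^'n) = outer u (v v* B)"
  by (simp add: outer_def matrix_matrix_mult_def vector_matrix_mult_def vec_eq_iff
      sum_distrib_left mult_ac)

lemma matrix_add_rdistrib: "((A::real^'n^'n) + B) ** C = A ** C + B ** C"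
  by (vector matrix_matrix_mult_def sum.distrib[symmetric] field_simps)

lemma transpose_add: "transpose ((A::real^'n^'n) + B) = transpose A + transpose B"
  by (simp add: transpose_def vec_eq_iff)

lemma transpose_outer: "transpose (outer u v) = outer v u"
  by (simp add: outer_def transpose_def vec_eq_iff mult_ac)

lemma outer_scaleR: "outer (c *\<^sub>R u) (d *\<^sub>R v) = (c * d) *\<^sub>R outer u v"
  by (simp add: outer_def vec_eq_iff mult_ac)

lemma outer_zero_left [simp]: "outer 0 v = 0"
  by (simp add: outer_def vec_eq_iff)

lemma trace_outer: "trace (outer x x) = norm x ^ 2"
  by (simp add: trace_def outer_def power2_norm_eq_inner inner_vec_def)

lemma trace_sum: "trace (\<Sum>j\<in>J. (B j :: real^'n^'n)) = (\<Sum>j\<in>J. trace (B j))"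
  unfolding trace_def by (simp add: sum_component) (rule sum.swap)

lemma matrix_mult_axis: "((A::real^'n^'n) *v axis j 1) $ i = A $ i $ j"
  by (metis cart_eq_inner_axis matrix_vector_mul_component)

lemma sum_matrix_mult_vec: "(\<Sum>s\<in>A. (M s :: real^'n^'n)) *v h = (\<Sum>s\<in>A. M s *v h)"
  by (induction A rule: infinite_finite_induct) (auto simp: matrix_vector_mult_add_rdistrib)

lemma det_scaled_id: "det (c *\<^sub>R mat 1 :: real^'n^'n) = c ^ CARD('n)"
  by (subst det_diagonal) (simp_all add: mat_def)

text \<open>Conjugating by the matrix whose k-th column is u (where u$k \<noteq> 0) turns u into
  the k-th unit vector, and a matrix that differs from the identity in one row has determinant
  equal to its diagonal entry in that row.\<close>
lemma det_mat1_add_outer: "det (mat 1 + outer u v :: real^'n^'n) = 1 + u \<bullet> v"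
proof (cases "u = 0")
  case True then show ?thesis by simp
next
  case False
  then obtain k where uk: "u$k \<noteq> 0" by (auto simp: vec_eq_iff)
  define C :: "real^'n^'n" where "C = (\<chi> i j. if j = k then (mat 1 *v u)$i else (mat 1::real^'n^'n)$i$j)"
  have detC: "det C = u$k"
    unfolding C_def using cramer_lemma[where A="mat 1::real^'n^'n" and k=k and x=u] by simp
  have Ck: "C *v axis k 1 = u"
    by (simp add: vec_eq_iff matrix_mult_axis C_def)
  define w where "w = v v* C"
  have wk: "w$k = u \<bullet> v"
  proof -
    have "C $ i $ k = u $ i" for i by (simp add: C_def)
    then show ?thesis
      by (simp add: w_def vector_matrix_mult_def inner_vec_def mult_ac)
  qed
  define R :: "real^'n^'n" where "R = mat 1 + outer (axis k 1) w"
  have "C ** R = C + outer u w"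
    by (simp add: R_def matrix_add_ldistrib matrix_mult_outer Ck)
  moreover have "(mat 1 + outer u v) ** C = C + outer u w"
    by (simp add: matrix_add_rdistrib outer_matrix_mult w_def)
  ultimately have eq: "det C * det R = det (mat 1 + outer u v) * det C"
    by (metis det_mul)
  have "transpose R = (\<chi> i j. if j = k then (axis k 1 + w)$i else (mat 1::real^'n^'n)$i$j)"
    by (auto simp: R_def transpose_def outer_def vec_eq_iff mat_def axis_def)
  moreover have "det (\<chi> i j. if j = k then (axis k 1 + w)$i else (mat 1::real^'n^'n)$i$j) = 1 + w$k"
    using cramer_lemma[where A="mat 1::real^'n^'n" and k=k and x="axis k 1 + w"]
    unfolding matrix_vector_mul_lid by simp
  ultimately have "det R = 1 + w$k"
    using det_transpose[of R] by simp
  with eq detC uk wk show ?thesis by simp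
qed

lemma wnorm2_zero [simp]: "wnorm2 A 0 = 0"
  by (simp add: wnorm2_def)

lemma wnorm2_add_matrix [simp]: "wnorm2 (A + B) x = wnorm2 A x + wnorm2 B x"
  by (simp add: wnorm2_def matrix_vector_mult_add_rdistrib inner_add_right)

lemma wnorm2_diff_matrix [simp]: "wnorm2 (A - B) x = wnorm2 A x - wnorm2 B x"
  by (simp add: wnorm2_def matrix_vector_mult_diff_rdistrib inner_diff_right)

lemma wnorm2_sum_matrix: "wnorm2 (\<Sum>j\<in>J. A j) x = (\<Sum>j\<in>J. wnorm2 (A j) x)"
  by (simp add: wnorm2_def sum_matrix_mult_vec inner_sum_right)

lemma wnorm2_scaleR_matrix [simp]: "wnorm2 (c *\<^sub>R A) x = c * wnorm2 A x"
  by (simp add: wnorm2_def scaleR_matrix_vector_assoc[symmetric])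

lemma wnorm2_scaleR [simp]: "wnorm2 A (c *\<^sub>R x) = c^2 * wnorm2 A x"
  by (simp add: wnorm2_def matrix_vector_mult_scaleR power2_eq_square)

lemma wnorm2_mat1 [simp]: "wnorm2 (mat 1) x = norm x ^ 2"
  by (simp add: wnorm2_def power2_norm_eq_inner)

lemma wnorm2_outer: "wnorm2 (outer x x) v = (x \<bullet> v)^2"
  by (simp add: wnorm2_def outer_mult_vec power2_eq_square inner_commute)

lemma wnorm2_symmetric_diff:
  assumes "transpose M = (M::real^'n^'n)"
  shows "wnorm2 M (a - b) = wnorm2 M a - 2 * (a \<bullet> (M *v b)) + wnorm2 M b"
proof -
  have "a \<bullet> (M *v b) = b \<bullet> (M *v a)"
    by (metis assms dot_lmul_matrix inner_commute transpose_matrix_vector)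
  then show ?thesis
    by (simp add: wnorm2_def matrix_vector_mult_diff_distrib inner_diff_left inner_diff_right)
qed

definition pos_def :: "real^'n^'n \<Rightarrow> bool" where
  "pos_def A \<longleftrightarrow> transpose A = A \<and> (\<forall>x. x \<noteq> 0 \<longrightarrow> 0 < wnorm2 A x)"

definition pos_semidef :: "real^'n^'n \<Rightarrow> bool" where
  "pos_semidef A \<longleftrightarrow> transpose A = A \<and> (\<forall>x. 0 \<le> wnorm2 A x)"

lemma pos_def_imp_pos_semidef: "pos_def A \<Longrightarrow> pos_semidef A"
  unfolding pos_def_def pos_semidef_def by (metis less_imp_le order.refl wnorm2_zero)

lemma pos_semidef_wnorm2_nonneg: "pos_semidef A \<Longrightarrow> 0 \<le> wnorm2 A x"
  by (simp add: pos_semidef_def)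

lemma pos_def_wnorm2_nonneg: "pos_def A \<Longrightarrow> 0 \<le> wnorm2 A x"
  by (simp add: pos_def_imp_pos_semidef pos_semidef_wnorm2_nonneg)

lemma pos_def_invertible:
  assumes "pos_def (A::real^'n^'n)" shows "invertible A"
proof -
  have "\<forall>x. A *v x = 0 \<longrightarrow> x = 0"
    using assms unfolding pos_def_def wnorm2_def by (metis inner_zero_right less_irrefl)
  then obtain B where "B ** A = mat 1" using matrix_left_invertible_ker by blast
  then show ?thesis using invertible_left_inverse by blast
qed

lemma matrix_mult_matrix_inv:
  assumes "invertible (A::real^'n^'n)"
  shows "A ** matrix_inv A = mat 1" "matrix_inv A ** A = mat 1"
proof -
  have "\<exists>A'. A ** A' = mat 1 \<and> A' ** A = mat 1" using assms unfolding invertible_def by blast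
  then have "A ** matrix_inv A = mat 1 \<and> matrix_inv A ** A = mat 1"
    unfolding matrix_inv_def by (rule someI_ex)
  then show "A ** matrix_inv A = mat 1" "matrix_inv A ** A = mat 1" by auto
qed

lemma matrix_inv_mult_vec:
  assumes "invertible (A::real^'n^'n)"
  shows "A *v (matrix_inv A *v x) = x" "matrix_inv A *v (A *v x) = x"
  using matrix_mult_matrix_inv[OF assms] by (simp_all add: matrix_vector_mul_assoc)

lemma matrix_inv_scaled_id:
  assumes "(c::real) \<noteq> 0"
  shows "matrix_inv (c *\<^sub>R mat 1 :: real^'n^'n) = (1/c) *\<^sub>R mat 1"
proof -
  have inverse: "(c *\<^sub>R mat 1 :: real^'n^'n) ** ((1/c) *\<^sub>R mat 1) = mat 1"
    using assms by (simp add: matrix_eq scaleR_matrix_vector_assoc[symmetric]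
        matrix_vector_mul_assoc[symmetric])
  then have "invertible (c *\<^sub>R mat 1 :: real^'n^'n)" using invertible_right_inverse by blast
  then have "matrix_inv (c *\<^sub>R mat 1 :: real^'n^'n) = matrix_inv (c *\<^sub>R mat 1) ** ((c *\<^sub>R mat 1) ** ((1/c) *\<^sub>R mat 1))"
    by (simp add: inverse)
  also have "\<dots> = (1/c) *\<^sub>R mat 1"
    by (simp add: matrix_mul_assoc matrix_mult_matrix_inv(2)[OF \<open>invertible _\<close>])
  finally show ?thesis .
qed

lemma transpose_matrix_inv:
  assumes "transpose A = (A::real^'n^'n)" "invertible A"
  shows "transpose (matrix_inv A) = matrix_inv A"
proof -
  have "A ** transpose (matrix_inv A) = mat 1"
    by (metis assms matrix_transpose_mul matrix_mult_matrix_inv(2) transpose_mat)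
  then have "matrix_inv A ** (A ** transpose (matrix_inv A)) = matrix_inv A" by simp
  then show ?thesis by (simp add: matrix_mul_assoc matrix_mult_matrix_inv[OF assms(2)])
qed

lemma pos_def_matrix_inv:
  assumes "pos_def (A::real^'n^'n)" shows "pos_def (matrix_inv A)"
  unfolding pos_def_def
proof (intro conjI allI impI)
  have "transpose A = A" using assms by (simp add: pos_def_def)
  then show "transpose (matrix_inv A) = matrix_inv A"
    using transpose_matrix_inv pos_def_invertible[OF assms] by blast
  fix x :: "real^'n" assume "x \<noteq> 0"
  define y where "y = matrix_inv A *v x"
  have x: "x = A *v y" by (simp add: y_def matrix_inv_mult_vec pos_def_invertible[OF assms])
  with \<open>x \<noteq> 0\<close> have "y \<noteq> 0" by auto
  then have "0 < wnorm2 A y" using assms by (simp add: pos_def_def)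
  moreover have "wnorm2 (matrix_inv A) x = wnorm2 A y"
    by (simp add: wnorm2_def y_def[symmetric]) (simp add: x inner_commute)
  ultimately show "0 < wnorm2 (matrix_inv A) x" by simp
qed

lemma det_add_outer:
  assumes "invertible (A::real^'n^'n)"
  shows "det (A + outer x x) = det A * (1 + wnorm2 (matrix_inv A) x)"
proof -
  have "A + outer x x = A ** (mat 1 + outer (matrix_inv A *v x) x)"
    by (simp add: matrix_add_ldistrib matrix_mult_outer matrix_inv_mult_vec assms)
  then show ?thesis by (simp add: det_mul det_mat1_add_outer inner_commute wnorm2_def)
qed

text \<open>Completing the square: the maximum over v of the left-hand side is attained at
  v = matrix_inv A *v x.\<close>
lemma wnorm2_matrix_inv_ge:
  assumes "pos_def (A::real^'n^'n)"
  shows "2 * (v \<bullet> x) - wnorm2 A v \<le> wnorm2 (matrix_inv A) x"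
proof -
  define a where "a = matrix_inv A *v x"
  have Aa: "A *v a = x" by (simp add: a_def matrix_inv_mult_vec pos_def_invertible assms)
  have "0 \<le> wnorm2 A (v - a)" using pos_def_wnorm2_nonneg[OF assms] .
  also have "\<dots> = wnorm2 A v - 2 * (v \<bullet> x) + a \<bullet> x"
    using assms unfolding pos_def_def
    by (simp add: wnorm2_symmetric_diff Aa) (simp add: wnorm2_def Aa inner_commute)
  finally show ?thesis by (simp add: a_def wnorm2_def inner_commute)
qed

lemma wnorm2_matrix_inv_antimono:
  assumes B: "pos_def (B::real^'n^'n)" and A: "invertible (A::real^'n^'n)" and c: "c > 0"
    and le: "\<And>v. wnorm2 B v \<le> c * wnorm2 A v"
  shows "wnorm2 (matrix_inv A) x \<le> c * wnorm2 (matrix_inv B) x"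
proof -
  define a where "a = matrix_inv A *v x"
  have Aa: "A *v a = x" by (simp add: a_def matrix_inv_mult_vec A)
  have "2 * ((a /\<^sub>R c) \<bullet> x) - wnorm2 B (a /\<^sub>R c) \<le> wnorm2 (matrix_inv B) x"
    by (rule wnorm2_matrix_inv_ge[OF B])
  moreover have "wnorm2 B (a /\<^sub>R c) \<le> (a /\<^sub>R c) \<bullet> x"
  proof -
    have "wnorm2 B (a /\<^sub>R c) = wnorm2 B a / c^2"
      by (simp add: power_divide divide_inverse power_inverse)
    also have "\<dots> \<le> c * wnorm2 A a / c^2"
      using le[of a] by (simp add: divide_right_mono)
    also have "\<dots> = (a /\<^sub>R c) \<bullet> x"
      using c by (simp add: wnorm2_def Aa power2_eq_square divide_inverse)
    finally show ?thesis .
  qed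
  ultimately have "(a \<bullet> x) / c \<le> wnorm2 (matrix_inv B) x"
    by (simp add: divide_inverse mult.commute)
  then show ?thesis
    using c by (simp add: a_def wnorm2_def inner_commute pos_divide_le_eq mult.commute)
qed

lemma inner_square_le_wnorm2:
  assumes "pos_def (A::real^'n^'n)"
  shows "(v \<bullet> x)^2 \<le> wnorm2 (matrix_inv A) x * wnorm2 A v"
proof (cases "v = 0")
  case True then show ?thesis by simp
next
  case False
  then have q: "0 < wnorm2 A v" using assms by (simp add: pos_def_def)
  define t where "t = (v \<bullet> x) / wnorm2 A v"
  have "2 * ((t *\<^sub>R v) \<bullet> x) - wnorm2 A (t *\<^sub>R v) \<le> wnorm2 (matrix_inv A) x"
    by (rule wnorm2_matrix_inv_ge[OF assms])
  then have "(v \<bullet> x)^2 / wnorm2 A v \<le> wnorm2 (matrix_inv A) x"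
    using q by (simp add: t_def power2_eq_square field_simps)
  then show ?thesis using q by (simp add: field_simps)
qed

lemma pos_def_add_pos_semidef:
  assumes "pos_def A" "pos_semidef B"
  shows "pos_def (A + B)"
  using assms unfolding pos_def_def pos_semidef_def
  by (auto simp: transpose_add intro: add_pos_nonneg)

lemma pos_semidef_outer: "pos_semidef (outer x x)"
  by (simp add: pos_semidef_def transpose_outer wnorm2_outer)

lemma pos_semidef_sum:
  assumes "\<And>j. j \<in> J \<Longrightarrow> pos_semidef (A j)"
  shows "pos_semidef (\<Sum>j\<in>J. A j)"
proof -
  have "transpose (\<Sum>j\<in>J. A j) = (\<Sum>j\<in>J. transpose (A j))"
    by (simp add: transpose_def vec_eq_iff sum_component)
  then show ?thesis
    using assms by (simp add: pos_semidef_def wnorm2_sum_matrix sum_nonneg)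
qed

lemma pos_def_scaled_id: "c > 0 \<Longrightarrow> pos_def (c *\<^sub>R mat 1 :: real^'n^'n)"
  by (simp add: pos_def_def transpose_scalar)

lemma wnorm2_matrix_inv_scaled_id:
  "c \<noteq> 0 \<Longrightarrow> wnorm2 (matrix_inv (c *\<^sub>R mat 1 :: real^'n^'n)) x = norm x ^ 2 / c"
  by (simp add: matrix_inv_scaled_id)

lemma wnorm2_diff_le:
  assumes "pos_semidef M"
  shows "wnorm2 M (a - b) \<le> 2 * wnorm2 M a + 2 * wnorm2 M b"
proof -
  have "wnorm2 M (a - b) + wnorm2 M (a + b) = 2 * wnorm2 M a + 2 * wnorm2 M b"
    by (simp add: wnorm2_def matrix_vector_mult_diff_distrib matrix_vector_right_distrib
        inner_diff_left inner_diff_right inner_add_left inner_add_right)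
  moreover have "0 \<le> wnorm2 M (a + b)" using assms by (rule pos_semidef_wnorm2_nonneg)
  ultimately show ?thesis by linarith
qed

section \<open>Hadamard's inequality\<close>

definition clear_row_col :: "'n \<Rightarrow> real^'n^'n \<Rightarrow> real^'n^'n" where
  "clear_row_col k W = (\<chi> i j. if i = k \<or> j = k then mat 1 $ i $ j else W$i$j)"

definition offdiag_column :: "'n \<Rightarrow> real^'n^'n \<Rightarrow> real^'n" where
  "offdiag_column k W = (\<chi> i. if i = k then 0 else W$i$k)"

text \<open>The Schur complement of the pivot W$k$k, padded with the identity in row and column k
  so that it remains a matrix of the same type.\<close>
definition schur_compl :: "'n \<Rightarrow> real^'n^'n \<Rightarrow> real^'n^'n" where
  "schur_compl k W = clear_row_col k W
     - (1 / W$k$k) *\<^sub>R outer (offdiag_column k W) (offdiag_column k W)"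

lemma schur_compl_component:
  "schur_compl k W $ i $ j = (if i = k \<or> j = k then mat 1 $ i $ j
     else W$i$j - W$i$k * W$j$k / W$k$k)"
  by (auto simp: schur_compl_def clear_row_col_def offdiag_column_def outer_def)

lemma wnorm2_axis: "wnorm2 W (axis k 1) = W$k$k"
  by (simp add: wnorm2_def inner_axis' matrix_mult_axis)

lemma pos_def_diag_pos: "pos_def W \<Longrightarrow> 0 < W$k$k"
  by (metis axis_eq_0_iff pos_def_def wnorm2_axis zero_neq_one)

lemma wnorm2_eq_double_sum:
  "wnorm2 (A::real^'n^'n) x = (\<Sum>i\<in>UNIV. \<Sum>j\<in>UNIV. x$i * A$i$j * x$j)"
  by (simp add: wnorm2_def inner_vec_def matrix_vector_mult_def sum_distrib_left mult_ac)

lemma symmetric_component: "transpose W = W \<Longrightarrow> W$i$j = W$j$i"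
  by (metis transpose_def vec_lambda_beta)

lemma wnorm2_clear_row_col:
  "wnorm2 (clear_row_col k (W::real^'n^'n)) x = wnorm2 W (\<chi> i. if i = k then 0 else x$i) + (x$k)^2"
proof -
  define P :: "real^'n" where "P = (\<chi> i. if i = k then 0 else x$i)"
  have "wnorm2 (clear_row_col k W) x
      = (\<Sum>i\<in>UNIV. \<Sum>j\<in>UNIV. P$i * W$i$j * P$j + (if j = k then (if i = k then (x$k)^2 else 0) else 0))"
    unfolding wnorm2_eq_double_sum
    by (intro sum.cong refl) (auto simp: clear_row_col_def P_def mat_def power2_eq_square)
  also have "\<dots> = wnorm2 W P + (x$k)^2"
    by (simp only: sum.distrib wnorm2_eq_double_sum) (simp add: sum.delta)
  finally show ?thesis by (simp add: P_def)
qed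

text \<open>The k-th coordinate of the vector on the right is chosen to cancel the cross terms
  of the pivot row.\<close>
lemma wnorm2_schur_compl:
  assumes "pos_def (W::real^'n^'n)"
  shows "wnorm2 (schur_compl k W) x
    = wnorm2 W ((\<chi> i. if i = k then 0 else x$i)
        - ((offdiag_column k W \<bullet> x) / W$k$k) *\<^sub>R axis k 1) + (x$k)^2"
proof -
  define w where "w = W$k$k"
  define b where "b = offdiag_column k W"
  define P :: "real^'n" where "P = (\<chi> i. if i = k then 0 else x$i)"
  have w: "0 < w" using pos_def_diag_pos[OF assms] by (simp add: w_def)
  have sym: "transpose W = W" using assms by (simp add: pos_def_def)
  have "P \<bullet> (W *v axis k 1) = (\<Sum>i\<in>UNIV. P$i * W$i$k)"
    by (simp add: inner_vec_def matrix_mult_axis)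
  also have "\<dots> = b \<bullet> x"
    unfolding inner_vec_def
    by (intro sum.cong refl) (simp add: b_def offdiag_column_def P_def mult.commute)
  finally have cross: "P \<bullet> (W *v axis k 1) = b \<bullet> x" .
  have "wnorm2 W (P - ((b \<bullet> x) / w) *\<^sub>R axis k 1)
      = wnorm2 W P - 2 * ((b \<bullet> x) / w) * (b \<bullet> x) + ((b \<bullet> x) / w)^2 * w"
    using sym by (simp add: wnorm2_symmetric_diff matrix_vector_mult_scaleR cross wnorm2_axis w_def)
  also have "\<dots> = wnorm2 W P - (b \<bullet> x)^2 / w"
    using w by (simp add: power2_eq_square field_simps)
  finally have "wnorm2 W (P - ((b \<bullet> x) / w) *\<^sub>R axis k 1) = wnorm2 W P - (b \<bullet> x)^2 / w" .
  moreover have "wnorm2 (schur_compl k W) x = wnorm2 W P + (x$k)^2 - (b \<bullet> x)^2 / w"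
    by (simp add: schur_compl_def wnorm2_clear_row_col wnorm2_outer P_def b_def w_def inner_commute)
  ultimately show ?thesis by (simp add: P_def b_def w_def)
qed

lemma pos_def_schur_compl:
  assumes "pos_def (W::real^'n^'n)" shows "pos_def (schur_compl k W)"
  unfolding pos_def_def
proof (intro conjI allI impI)
  have "W$i$j = W$j$i" for i j
    using assms symmetric_component by (auto simp: pos_def_def)
  then show "transpose (schur_compl k W) = schur_compl k W"
    by (auto simp: transpose_def vec_eq_iff schur_compl_component mat_def mult.commute)
  fix x :: "real^'n" assume "x \<noteq> 0"
  define y where "y = (\<chi> i. if i = k then 0 else x$i)
    - ((offdiag_column k W \<bullet> x) / W$k$k) *\<^sub>R axis k 1"
  have identity: "wnorm2 (schur_compl k W) x = wnorm2 W y + (x$k)^2"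
    unfolding y_def by (rule wnorm2_schur_compl[OF assms])
  show "0 < wnorm2 (schur_compl k W) x"
  proof (cases "x$k = 0")
    case True
    from \<open>x \<noteq> 0\<close> obtain i where "x$i \<noteq> 0" by (auto simp: vec_eq_iff)
    with True have "y$i \<noteq> 0" by (auto simp: y_def axis_def)
    then have "y \<noteq> 0" by auto
    then have "0 < wnorm2 W y" using assms by (simp add: pos_def_def)
    then show ?thesis by (simp add: identity add_pos_nonneg)
  next
    case False
    then show ?thesis
      using pos_def_wnorm2_nonneg[OF assms, of y] by (simp add: identity add_nonneg_pos)
  qed
qed

text \<open>Block LDL-factorisation W = L (S + (w - 1) e e^T) L^T with e = axis k 1,
  L = I + (1/w) b e^T and S the Schur complement.\<close>
lemma det_schur_compl:
  assumes "pos_def (W::real^'n^'n)"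
  shows "det W = W$k$k * det (schur_compl k W)"
proof -
  define w where "w = W$k$k"
  define b where "b = offdiag_column k W"
  define e :: "real^'n" where "e = axis k 1"
  define S where "S = schur_compl k W"
  have w: "0 < w" using pos_def_diag_pos[OF assms] by (simp add: w_def)
  have sym: "W$i$j = W$j$i" for i j
    using assms symmetric_component by (auto simp: pos_def_def)
  have Se: "S *v e = e"
    by (simp add: vec_eq_iff e_def matrix_mult_axis S_def schur_compl_component mat_def)
      (simp add: axis_def)
  have symS: "transpose S = S" using pos_def_schur_compl[OF assms] by (simp add: S_def pos_def_def)
  have ee: "e \<bullet> e = 1" by (simp add: e_def inner_axis)
  define D :: "real^'n^'n" where "D = mat 1 + outer ((w - 1) *\<^sub>R e) e"
  define M where "M = S + outer ((w - 1) *\<^sub>R e) e"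
  have SD: "S ** D = M"
    by (simp add: D_def M_def matrix_add_ldistrib matrix_mult_outer matrix_vector_mult_scaleR Se)
  have detD: "det D = w" by (simp add: D_def det_mat1_add_outer e_def)
  define L :: "real^'n^'n" where "L = mat 1 + outer ((1/w) *\<^sub>R b) e"
  have detL: "det L = 1"
    by (simp add: L_def det_mat1_add_outer e_def inner_axis b_def offdiag_column_def)
  have Me: "M *v e = w *\<^sub>R e"
    by (simp add: M_def matrix_vector_mult_add_rdistrib Se outer_mult_vec ee algebra_simps)
  have "transpose M = M"
    by (simp add: M_def transpose_add transpose_outer symS) (simp add: outer_def vec_eq_iff)
  then have eM: "e v* M = w *\<^sub>R e" by (metis Me transpose_matrix_vector)
  have LM: "L ** M = M + outer b e"
    using w by (simp add: L_def matrix_add_rdistrib outer_matrix_mult eM outer_scaleR)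
  have Mbe: "(M + outer b e) *v e = w *\<^sub>R e + b"
    by (simp add: matrix_vector_mult_add_rdistrib Me outer_mult_vec ee)
  have tL: "transpose L = mat 1 + outer e ((1/w) *\<^sub>R b)"
    by (simp add: L_def transpose_add transpose_outer)
  have "L ** M ** transpose L = (M + outer b e) ** transpose L" by (simp add: LM)
  also have "\<dots> = M + outer b e + outer (w *\<^sub>R e + b) ((1/w) *\<^sub>R b)"
    by (simp only: tL matrix_add_ldistrib matrix_mul_rid matrix_mult_outer Mbe)
  also have "\<dots> = W"
    using w sym
    by (auto simp: vec_eq_iff M_def S_def outer_def schur_compl_component e_def axis_def mat_def
        b_def offdiag_column_def w_def field_simps)
  finally have "W = L ** (S ** D) ** transpose L" by (simp add: SD)
  then show ?thesis
    by (metis det_mul det_transpose detD detL mult.commute mult_1 S_def w_def)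
qed

lemma hadamard_inequality_on:
  assumes "pos_def (W::real^'n^'n)" "\<And>i j. i \<notin> F \<or> j \<notin> F \<Longrightarrow> W$i$j = mat 1 $ i $ j"
  shows "0 < det W \<and> det W \<le> (\<Prod>i\<in>F. W$i$i)"
proof -
  have "finite F" by simp
  then show ?thesis
    using assms
  proof (induction F arbitrary: W rule: finite_induct)
    case empty
    then have "W = mat 1" by (simp add: vec_eq_iff)
    then show ?case by simp
  next
    case (insert k F)
    define S where "S = schur_compl k W"
    have S: "pos_def S" using pos_def_schur_compl[OF insert.prems(1)] by (simp add: S_def)
    have "S$i$j = mat 1 $ i $ j" if "i \<notin> F \<or> j \<notin> F" for i j
      using that insert.prems(2) insert.hyps(2)
      by (cases "i = k \<or> j = k") (auto simp: S_def schur_compl_component mat_def)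
    then have IH: "0 < det S" "det S \<le> (\<Prod>i\<in>F. S$i$i)"
      using insert.IH[OF S] by auto
    have w: "0 < W$k$k" by (rule pos_def_diag_pos[OF insert.prems(1)])
    have "(\<Prod>i\<in>F. S$i$i) \<le> (\<Prod>i\<in>F. W$i$i)"
    proof (intro prod_mono conjI)
      fix i assume "i \<in> F"
      then have "i \<noteq> k" using insert.hyps(2) by auto
      show "0 \<le> S$i$i" using pos_def_diag_pos[OF S] less_imp_le by blast
      show "S$i$i \<le> W$i$i"
        using \<open>i \<noteq> k\<close> w by (simp add: S_def schur_compl_component)
    qed
    with IH have "det S \<le> (\<Prod>i\<in>F. W$i$i)" by linarith
    moreover have "det W = W$k$k * det S"
      unfolding S_def by (rule det_schur_compl[OF insert.prems(1)])
    ultimately show ?case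
      using IH(1) w insert.hyps by (simp add: mult_left_mono)
  qed
qed

lemma pos_def_det_pos: "pos_def W \<Longrightarrow> 0 < det W"
  using hadamard_inequality_on[of W UNIV] by simp

theorem hadamard_inequality: "pos_def W \<Longrightarrow> det W \<le> (\<Prod>i\<in>UNIV. W$i$i)"
  using hadamard_inequality_on[of W UNIV] by simp

lemma ln_det_le_trace:
  assumes "pos_def (W::real^'n^'n)"
  shows "ln (det W) \<le> real CARD('n) * ln (trace W / real CARD('n))"
proof -
  define n where "n = real CARD('n)"
  define m where "m = trace W / n"
  have n: "0 < n" by (simp add: n_def)
  have diag: "0 < W$i$i" for i using pos_def_diag_pos[OF assms] .
  have trace: "trace W = (\<Sum>i\<in>UNIV. W$i$i)" by (simp add: trace_def)
  have m: "0 < m" unfolding m_def trace using n diag by (simp add: sum_pos)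
  have "ln (det W) \<le> ln (\<Prod>i\<in>UNIV. W$i$i)"
    using hadamard_inequality[OF assms] pos_def_det_pos[OF assms] by simp
  also have "\<dots> = (\<Sum>i\<in>UNIV. ln (W$i$i))"
    using diag by (simp add: ln_prod less_imp_neq[symmetric])
  also have "\<dots> = (\<Sum>i\<in>UNIV. ln (W$i$i / m)) + n * ln m"
  proof -
    have "(\<Sum>i\<in>UNIV. ln (W$i$i / m)) = (\<Sum>i\<in>UNIV. ln (W$i$i) - ln m)"
      using diag m by (intro sum.cong refl) (simp add: ln_div less_imp_neq[symmetric])
    then show ?thesis by (simp add: sum_subtractf n_def)
  qed
  also have "(\<Sum>i\<in>UNIV. ln (W$i$i / m)) \<le> (\<Sum>i\<in>UNIV. W$i$i / m - 1)"
    by (intro sum_mono ln_le_minus_one) (use diag m in simp)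
  also have "(\<Sum>i\<in>UNIV. W$i$i / m - 1) = trace W / m - n"
    by (simp add: sum_subtractf sum_divide_distrib trace n_def)
  also have "\<dots> = 0" using m n by (simp add: m_def zero_less_divide_iff)
  finally show ?thesis by (simp add: n_def m_def)
qed

section \<open>The elliptical potential lemma\<close>

lemma wnorm2_add_sum_outer_le:
  assumes "pos_def (A::real^'n^'n)"
  shows "wnorm2 (A + (\<Sum>j\<in>J. outer (x j) (x j))) v
    \<le> (1 + (\<Sum>j\<in>J. wnorm2 (matrix_inv A) (x j))) * wnorm2 A v"
proof -
  have "(\<Sum>j\<in>J. (x j \<bullet> v)^2) \<le> (\<Sum>j\<in>J. wnorm2 (matrix_inv A) (x j)) * wnorm2 A v"
    unfolding sum_distrib_right
    by (intro sum_mono) (metis inner_commute inner_square_le_wnorm2[OF assms])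
  then show ?thesis
    by (simp add: wnorm2_sum_matrix wnorm2_outer distrib_right)
qed

lemma pos_def_add_sum_outer: "pos_def A \<Longrightarrow> pos_def (A + (\<Sum>j\<in>J. outer (x j) (x j)))"
  by (simp add: pos_def_add_pos_semidef pos_semidef_outer pos_semidef_sum)

lemma det_add_sum_outer_ge:
  assumes "pos_def (A::real^'n^'n)" "finite J"
  shows "det A * (1 + (\<Sum>j\<in>J. wnorm2 (matrix_inv A) (x j)))
    \<le> det (A + (\<Sum>j\<in>J. outer (x j) (x j)))"
  using assms(2)
proof (induction J rule: finite_induct)
  case empty
  then show ?case by simp
next
  case (insert j J)
  define W where "W = A + (\<Sum>j\<in>J. outer (x j) (x j))"
  define B where "B = (\<Sum>j\<in>J. wnorm2 (matrix_inv A) (x j))"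
  define b where "b = wnorm2 (matrix_inv A) (x j)"
  have W: "pos_def W" unfolding W_def by (rule pos_def_add_sum_outer[OF assms(1)])
  have B: "0 \<le> B" unfolding B_def
    by (intro sum_nonneg pos_def_wnorm2_nonneg pos_def_matrix_inv assms(1))
  have b: "b \<le> (1 + B) * wnorm2 (matrix_inv W) (x j)"
    unfolding b_def using B wnorm2_add_sum_outer_le[OF assms(1)]
    by (intro wnorm2_matrix_inv_antimono[OF W pos_def_invertible[OF assms(1)]])
      (auto simp: W_def B_def)
  have IH: "det A * (1 + B) \<le> det W" using insert.IH by (simp add: W_def B_def)
  have sum_insert: "(\<Sum>j\<in>insert j J. wnorm2 (matrix_inv A) (x j)) = B + b"
    "A + (\<Sum>j\<in>insert j J. outer (x j) (x j)) = W + outer (x j) (x j)"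
    using insert.hyps by (simp_all add: W_def B_def b_def add_ac)
  have "det A * (1 + (B + b)) = det A * (1 + B) + det A * b" by (simp add: algebra_simps)
  also have "\<dots> \<le> det A * (1 + B) + det A * ((1 + B) * wnorm2 (matrix_inv W) (x j))"
    using b pos_def_det_pos[OF assms(1)] by simp
  also have "\<dots> = det A * (1 + B) * (1 + wnorm2 (matrix_inv W) (x j))"
    by (simp add: algebra_simps)
  also have "\<dots> \<le> det W * (1 + wnorm2 (matrix_inv W) (x j))"
    using IH pos_def_wnorm2_nonneg[OF pos_def_matrix_inv[OF W]] by (simp add: mult_right_mono)
  also have "\<dots> = det (W + outer (x j) (x j))"
    by (simp add: det_add_outer pos_def_invertible[OF W])
  finally show ?case unfolding sum_insert .
qed

lemma le_two_ln_one_plus: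
  fixes z :: real assumes "0 \<le> z" "z \<le> 1" shows "z \<le> 2 * ln (1 + z)"
proof -
  have "ln (1 / (1 + z)) \<le> 1 / (1 + z) - 1" using assms by (intro ln_le_minus_one) auto
  then have "z / (1 + z) \<le> ln (1 + z)" using assms by (simp add: ln_div field_simps)
  moreover have "z / 2 \<le> z / (1 + z)" using assms by (intro divide_left_mono) auto
  ultimately show ?thesis by linarith
qed

locale rank_one_updates =
  fixes A :: "nat \<Rightarrow> real^'n^'n" and J :: "nat \<Rightarrow> 'j set" and x :: "nat \<Rightarrow> 'j \<Rightarrow> real^'n"
    and lam :: real
  assumes lam_pos: "0 < lam"
    and A_1: "A 1 = lam *\<^sub>R mat 1"
    and finite_J: "finite (J t)"
    and A_Suc: "1 \<le> t \<Longrightarrow> A (Suc t) = A t + (\<Sum>j\<in>J t. outer (x t j) (x t j))"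
begin

lemma A_Suc_0: "A (Suc 0) = lam *\<^sub>R mat 1"
  using A_1 by simp

lemma pos_def_A_and_lam_le_A: "1 \<le> t \<Longrightarrow> pos_def (A t) \<and> (\<forall>v. lam * norm v ^ 2 \<le> wnorm2 (A t) v)"
proof (induction t rule: nat_induct_at_least)
  case base
  then show ?case using pos_def_scaled_id[OF lam_pos] by (simp add: A_Suc_0)
next
  case (Suc t)
  have "0 \<le> wnorm2 (\<Sum>j\<in>J t. outer (x t j) (x t j)) v" for v
    by (intro pos_semidef_wnorm2_nonneg pos_semidef_sum pos_semidef_outer)
  then show ?case
    using Suc by (simp add: A_Suc pos_def_add_sum_outer add_increasing2)
qed

lemma pos_def_A: "1 \<le> t \<Longrightarrow> pos_def (A t)"
  using pos_def_A_and_lam_le_A by blast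

lemma wnorm2_matrix_inv_A_le:
  assumes "1 \<le> t" shows "wnorm2 (matrix_inv (A t)) v \<le> norm v ^ 2 / lam"
proof -
  have "wnorm2 (matrix_inv (A t)) v \<le> 1 * wnorm2 (matrix_inv (lam *\<^sub>R mat 1 :: real^'n^'n)) v"
    using pos_def_A_and_lam_le_A[OF assms]
    by (intro wnorm2_matrix_inv_antimono pos_def_scaled_id lam_pos pos_def_invertible) simp_all
  then show ?thesis using lam_pos by (simp add: wnorm2_matrix_inv_scaled_id)
qed

lemma trace_A: "trace (A (Suc m)) = lam * CARD('n) + (\<Sum>t=1..m. \<Sum>j\<in>J t. norm (x t j) ^ 2)"
proof (induction m)
  case 0
  have "trace (lam *\<^sub>R mat 1 :: real^'n^'n) = lam * CARD('n)" by (simp add: trace_def mat_def)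
  then show ?case by (simp add: A_Suc_0)
next
  case (Suc m)
  then show ?case by (simp add: A_Suc trace_add trace_sum trace_outer)
qed

abbreviation potential :: "nat \<Rightarrow> real" where
  "potential t \<equiv> \<Sum>j\<in>J t. wnorm2 (matrix_inv (A t)) (x t j)"

lemma potential_nonneg: "1 \<le> t \<Longrightarrow> 0 \<le> potential t"
  by (intro sum_nonneg pos_def_wnorm2_nonneg pos_def_matrix_inv pos_def_A)

lemma det_A_ge: "lam ^ CARD('n) * (\<Prod>t=1..m. 1 + potential t) \<le> det (A (Suc m))"
proof (induction m)
  case 0
  then show ?case by (simp add: A_Suc_0 det_scaled_id)
next
  case (Suc m)
  have "lam ^ CARD('n) * (\<Prod>t=1..Suc m. 1 + potential t)
      = lam ^ CARD('n) * (\<Prod>t=1..m. 1 + potential t) * (1 + potential (Suc m))"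
    by (simp add: mult.assoc)
  also have "\<dots> \<le> det (A (Suc m)) * (1 + potential (Suc m))"
    using Suc.IH potential_nonneg[of "Suc m"] by (simp add: mult_right_mono)
  also have "\<dots> \<le> det (A (Suc (Suc m)))"
    using det_add_sum_outer_ge[OF pos_def_A finite_J] by (simp add: A_Suc)
  finally show ?case .
qed

theorem elliptical_potential:
  assumes small: "\<And>t. t \<in> {1..T} \<Longrightarrow> potential t \<le> 1"
  shows "(\<Sum>t=1..T. potential t)
    \<le> 2 * CARD('n) * ln (1 + (\<Sum>t=1..T. \<Sum>j\<in>J t. norm (x t j) ^ 2) / (lam * CARD('n)))"
proof -
  define n where "n = real CARD('n)"
  define X where "X = (\<Sum>t=1..T. \<Sum>j\<in>J t. norm (x t j) ^ 2)"
  have n: "0 < n" by (simp add: n_def)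
  have X: "0 \<le> X" unfolding X_def by (intro sum_nonneg) auto
  have "(\<Sum>t=1..T. potential t) \<le> (\<Sum>t=1..T. 2 * ln (1 + potential t))"
    using small potential_nonneg by (intro sum_mono le_two_ln_one_plus) auto
  also have "\<dots> = 2 * ln (\<Prod>t=1..T. 1 + potential t)"
    using potential_nonneg
    by (subst ln_prod) (auto simp: sum_distrib_left add_pos_nonneg less_imp_neq[symmetric])
  also have "ln (\<Prod>t=1..T. 1 + potential t) \<le> ln (det (A (Suc T))) - n * ln lam"
  proof -
    define P where "P = (\<Prod>t=1..T. 1 + potential t)"
    have P: "0 < P"
      unfolding P_def using potential_nonneg by (intro prod_pos) (simp add: add_pos_nonneg)
    have "ln (lam ^ CARD('n) * P) \<le> ln (det (A (Suc T)))"
      using det_A_ge[of T] P lam_pos by (intro ln_mono) (auto simp: P_def)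
    then show ?thesis
      unfolding P_def[symmetric] using P lam_pos by (simp add: ln_mult ln_realpow n_def)
  qed
  also have "ln (det (A (Suc T))) \<le> n * ln ((lam * n + X) / n)"
    using ln_det_le_trace[OF pos_def_A[of "Suc T"]] trace_A[of T] by (simp add: n_def X_def)
  also have "(lam * n + X) / n = lam * (1 + X / (lam * n))"
    using lam_pos n by (simp add: field_simps)
  also have "n * ln (lam * (1 + X / (lam * n))) - n * ln lam = n * ln (1 + X / (lam * n))"
  proof -
    have "0 < 1 + X / (lam * n)" using lam_pos n X by (simp add: add_pos_nonneg)
    then show ?thesis using lam_pos by (subst ln_mult) (auto simp: algebra_simps)
  qed
  finally show ?thesis by (simp add: n_def X_def)
qed

corollary sum_potential_le:
  assumes bounded: "\<And>t. t \<in> {1..T} \<Longrightarrow> (\<Sum>j\<in>J t. norm (x t j) ^ 2) \<le> L^2"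
    and "L^2 \<le> lam"
  shows "(\<Sum>t=1..T. potential t) \<le> 2 * CARD('n) * ln (1 + real T * L^2 / (lam * CARD('n)))"
proof -
  have "potential t \<le> 1" if "t \<in> {1..T}" for t
  proof -
    have "potential t \<le> (\<Sum>j\<in>J t. norm (x t j) ^ 2) / lam"
      unfolding sum_divide_distrib using that by (intro sum_mono wnorm2_matrix_inv_A_le) simp
    also have "\<dots> \<le> L^2 / lam"
      using bounded[OF that] lam_pos by (simp add: divide_right_mono)
    also have "\<dots> \<le> 1" using assms(2) lam_pos by simp
    finally show ?thesis .
  qed
  then have "(\<Sum>t=1..T. potential t)
      \<le> 2 * CARD('n) * ln (1 + (\<Sum>t=1..T. \<Sum>j\<in>J t. norm (x t j) ^ 2) / (lam * CARD('n)))"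
    by (rule elliptical_potential)
  also have "\<dots> \<le> 2 * CARD('n) * ln (1 + real T * L^2 / (lam * CARD('n)))"
  proof -
    have "(\<Sum>t=1..T. \<Sum>j\<in>J t. norm (x t j) ^ 2) \<le> real T * L^2"
      using sum_mono[of "{1..T}", OF bounded] by simp
    then have "(\<Sum>t=1..T. \<Sum>j\<in>J t. norm (x t j) ^ 2) / (lam * CARD('n))
        \<le> real T * L^2 / (lam * CARD('n))"
      using lam_pos by (intro divide_right_mono) auto
    then show ?thesis
      using lam_pos by (intro mult_left_mono ln_mono)
        (auto intro!: sum_nonneg add_pos_nonneg divide_nonneg_pos)
  qed
  finally show ?thesis .
qed

end

section \<open>Weighted means and covariances\<close>

definition wmean :: "('s \<Rightarrow> real) \<Rightarrow> 's set \<Rightarrow> ('s \<Rightarrow> real^'n) \<Rightarrow> real^'n" where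
  "wmean w S f = (\<Sum>s\<in>S. w s *\<^sub>R f s)"

definition wcov :: "('s \<Rightarrow> real) \<Rightarrow> 's set \<Rightarrow> ('s \<Rightarrow> real^'n) \<Rightarrow> real^'n^'n" where
  "wcov w S f = (\<Sum>s\<in>S. w s *\<^sub>R outer (f s - wmean w S f) (f s - wmean w S f))"

locale prob_weights =
  fixes S :: "'s set" and w :: "'s \<Rightarrow> real"
  assumes finite_S: "finite S"
    and nonneg: "s \<in> S \<Longrightarrow> 0 \<le> w s"
    and sum_eq_1: "(\<Sum>s\<in>S. w s) = 1"
begin

lemma weight_le_1: "s \<in> S \<Longrightarrow> w s \<le> 1"
  using member_le_sum[of s S w] nonneg finite_S sum_eq_1 by simp

lemma sum_weighted_const: "(\<Sum>s\<in>S. w s * c) = c"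
  by (simp add: sum_distrib_right[symmetric] sum_eq_1)

lemma inner_wmean: "wmean w S f \<bullet> v = (\<Sum>s\<in>S. w s * (f s \<bullet> v))"
  by (simp add: wmean_def inner_sum_left)

lemma sum_weighted_centered: "(\<Sum>s\<in>S. w s * ((f s - wmean w S f) \<bullet> v)) = 0"
proof -
  have "(\<Sum>s\<in>S. w s * ((f s - wmean w S f) \<bullet> v))
      = (\<Sum>s\<in>S. w s * (f s \<bullet> v)) - (\<Sum>s\<in>S. w s * (wmean w S f \<bullet> v))"
    by (simp add: inner_diff_left right_diff_distrib sum_subtractf)
  then show ?thesis by (simp only: sum_weighted_const inner_wmean)
qed

lemma wcov_mult_vec: "wcov w S f *v h = (\<Sum>s\<in>S. (w s * ((f s - wmean w S f) \<bullet> h)) *\<^sub>R f s)"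
proof -
  let ?c = "\<lambda>s. w s * ((f s - wmean w S f) \<bullet> h)"
  have "wcov w S f *v h = (\<Sum>s\<in>S. ?c s *\<^sub>R (f s - wmean w S f))"
    unfolding wcov_def sum_matrix_mult_vec
    by (intro sum.cong refl) (simp add: scaleR_matrix_vector_assoc[symmetric] outer_mult_vec)
  also have "\<dots> = (\<Sum>s\<in>S. ?c s *\<^sub>R f s) - (\<Sum>s\<in>S. ?c s) *\<^sub>R wmean w S f"
    by (simp add: scaleR_diff_right sum_subtractf scaleR_sum_left)
  finally show ?thesis by (simp add: sum_weighted_centered)
qed

lemma wnorm2_wcov: "wnorm2 (wcov w S f) v = (\<Sum>s\<in>S. w s * ((f s - wmean w S f) \<bullet> v)^2)"
  by (simp add: wcov_def wnorm2_sum_matrix wnorm2_outer)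

lemma wcov_eq_sum_outer:
  "wcov w S f = (\<Sum>s\<in>S. outer (sqrt (w s) *\<^sub>R (f s - wmean w S f)) (sqrt (w s) *\<^sub>R (f s - wmean w S f)))"
  unfolding wcov_def outer_scaleR using nonneg by (intro sum.cong refl) (simp add: real_sqrt_mult[symmetric])

lemma pos_semidef_wcov: "pos_semidef (wcov w S f)"
  unfolding wcov_eq_sum_outer by (intro pos_semidef_sum pos_semidef_outer)

lemma sum_wnorm2_centered:
  assumes "transpose M = M"
  shows "(\<Sum>s\<in>S. w s * wnorm2 M (f s - wmean w S f))
    = (\<Sum>s\<in>S. w s * wnorm2 M (f s)) - wnorm2 M (wmean w S f)"
proof -
  let ?m = "wmean w S f"
  have "(\<Sum>s\<in>S. w s * wnorm2 M (f s - ?m))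
      = (\<Sum>s\<in>S. w s * wnorm2 M (f s)) - 2 * (\<Sum>s\<in>S. w s * (f s \<bullet> (M *v ?m)))
        + (\<Sum>s\<in>S. w s * wnorm2 M ?m)"
    by (simp add: wnorm2_symmetric_diff[OF assms] algebra_simps sum.distrib sum_subtractf
        sum_distrib_left)
  also have "(\<Sum>s\<in>S. w s * (f s \<bullet> (M *v ?m))) = wnorm2 M ?m"
    by (simp add: inner_wmean[symmetric] wnorm2_def)
  finally show ?thesis by (simp add: sum_weighted_const)
qed

lemma wnorm2_wmean_le:
  assumes "pos_semidef M"
  shows "wnorm2 M (wmean w S f) \<le> (\<Sum>s\<in>S. w s * wnorm2 M (f s))"
proof -
  have "0 \<le> (\<Sum>s\<in>S. w s * wnorm2 M (f s - wmean w S f))"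
    using assms nonneg by (intro sum_nonneg mult_nonneg_nonneg pos_semidef_wnorm2_nonneg)
  then show ?thesis
    using assms by (simp add: sum_wnorm2_centered pos_semidef_def)
qed

lemma sum_weighted_norm_centered_le:
  assumes "\<And>s. s \<in> S \<Longrightarrow> norm (f s) \<le> L"
  shows "(\<Sum>s\<in>S. w s * norm (f s - wmean w S f) ^ 2) \<le> L^2"
proof -
  have "(\<Sum>s\<in>S. w s * norm (f s - wmean w S f) ^ 2) \<le> (\<Sum>s\<in>S. w s * norm (f s) ^ 2)"
    using sum_wnorm2_centered[of "mat 1" f] by simp
  also have "\<dots> \<le> (\<Sum>s\<in>S. w s * L^2)"
    using assms nonneg by (intro sum_mono mult_left_mono power_mono) auto
  finally show ?thesis by (simp add: sum_weighted_const)
qed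

text \<open>With a = f s1 \<bullet> v and \<mu> the mean of f \<bullet> v, the two summands at s1 and s0 alone
  contribute w1 (a - \<mu>)^2 + w0 \<mu>^2, and
  (w1 + w0) (w1 (a - \<mu>)^2 + w0 \<mu>^2) - w1 w0 a^2 = (w1 (a - \<mu>) - w0 \<mu>)^2.\<close>
lemma wnorm2_wcov_ge:
  assumes "s1 \<in> S" "s0 \<in> S" "f s0 = 0"
  shows "w s1 * w s0 * (f s1 \<bullet> v)^2 \<le> wnorm2 (wcov w S f) v"
proof (cases "s1 = s0")
  case True
  then show ?thesis
    using assms pos_semidef_wnorm2_nonneg[OF pos_semidef_wcov] by simp
next
  case False
  define a where "a = f s1 \<bullet> v"
  define \<mu> where "\<mu> = wmean w S f \<bullet> v"
  define Q where "Q = w s1 * (a - \<mu>)^2 + w s0 * \<mu>^2"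
  have "Q = (\<Sum>s\<in>{s1, s0}. w s * ((f s - wmean w S f) \<bullet> v)^2)"
    using False assms(3) by (simp add: Q_def a_def \<mu>_def inner_diff_left)
  also have "\<dots> \<le> wnorm2 (wcov w S f) v"
    unfolding wnorm2_wcov using assms nonneg finite_S by (intro sum_mono2) auto
  finally have Q_le: "Q \<le> wnorm2 (wcov w S f) v" .
  have "w s1 + w s0 = (\<Sum>s\<in>{s1, s0}. w s)" using False by simp
  also have "\<dots> \<le> 1"
    unfolding sum_eq_1[symmetric] using assms nonneg finite_S by (intro sum_mono2) auto
  finally have w_le: "w s1 + w s0 \<le> 1" .
  have Q0: "0 \<le> Q" unfolding Q_def using assms nonneg by simp
  have "(w s1 + w s0) * Q - w s1 * w s0 * a^2 = (w s1 * (a - \<mu>) - w s0 * \<mu>)^2"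
    by (simp add: Q_def power2_eq_square algebra_simps)
  then have "w s1 * w s0 * a^2 \<le> (w s1 + w s0) * Q" by (smt (verit) zero_le_power2)
  also have "\<dots> \<le> Q" using w_le Q0 assms nonneg by (intro mult_left_le_one_le) auto
  finally show ?thesis using Q_le by (simp add: a_def)
qed

end

section \<open>Softmax probabilities and the MNL loss\<close>

lemma grad_eqI:
  assumes "GDERIV F x :> D" shows "grad F x = D"
proof -
  have "GDERIV F x :> grad F x" unfolding grad_def by (rule someI[of _ D]) (rule assms)
  then have "(\<lambda>h. h \<bullet> grad F x) = (\<lambda>h. h \<bullet> D)"
    using has_derivative_unique assms unfolding gderiv_def by blast
  then have "(grad F x - D) \<bullet> (grad F x - D) = 0"
    by (metis inner_diff_right right_minus_eq inner_commute)
  then show ?thesis by simp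
qed

lemma hess_eqI:
  assumes "((\<lambda>y. grad F y) has_derivative (\<lambda>h. H *v h)) (at x)" shows "hess F x = H"
proof -
  have "((\<lambda>y. grad F y) has_derivative (\<lambda>h. hess F x *v h)) (at x)"
    unfolding hess_def by (rule someI[of _ H]) (rule assms)
  then have "(\<lambda>h. hess F x *v h) = (\<lambda>h. H *v h)"
    using has_derivative_unique assms by blast
  then show ?thesis by (simp add: matrix_eq fun_eq_iff)
qed

locale softmax =
  fixes S :: "'s set" and f :: "'s \<Rightarrow> real^'d"
  assumes finite_S: "finite S" and nonempty: "S \<noteq> {}"
begin

definition normalizer :: "real^'d \<Rightarrow> real" where
  "normalizer \<theta> = (\<Sum>s\<in>S. exp (f s \<bullet> \<theta>))"

definition prob :: "real^'d \<Rightarrow> 's \<Rightarrow> real" where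
  "prob \<theta> s = exp (f s \<bullet> \<theta>) / normalizer \<theta>"

lemma normalizer_pos: "0 < normalizer \<theta>"
  unfolding normalizer_def using finite_S nonempty by (intro sum_pos) auto

lemma prob_weights: "prob_weights S (prob \<theta>)"
proof
  show "finite S" by (rule finite_S)
  show "0 \<le> prob \<theta> s" for s
    unfolding prob_def using normalizer_pos[of \<theta>] by simp
  show "(\<Sum>s\<in>S. prob \<theta> s) = 1"
    unfolding prob_def using normalizer_pos[of \<theta>]
    by (simp add: sum_divide_distrib[symmetric] normalizer_def[symmetric])
qed

lemma has_derivative_normalizer:
  "(normalizer has_derivative (\<lambda>h. \<Sum>s\<in>S. exp (f s \<bullet> \<theta>) * (f s \<bullet> h))) (at \<theta>)"
  unfolding normalizer_def[abs_def] by (auto intro!: derivative_eq_intros simp: mult.commute)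

lemma inner_wmean_prob: "wmean (prob \<theta>) S f \<bullet> h = (\<Sum>s\<in>S. exp (f s \<bullet> \<theta>) * (f s \<bullet> h)) / normalizer \<theta>"
  by (simp add: wmean_def prob_def inner_sum_left sum_divide_distrib)

lemma has_derivative_ln_normalizer:
  "((\<lambda>\<theta>. ln (normalizer \<theta>)) has_derivative (\<lambda>h. h \<bullet> wmean (prob \<theta>) S f)) (at \<theta>)"
proof -
  have "((\<lambda>\<theta>. ln (normalizer \<theta>)) has_derivative
      (\<lambda>h. (\<Sum>s\<in>S. exp (f s \<bullet> \<theta>) * (f s \<bullet> h)) * inverse (normalizer \<theta>))) (at \<theta>)"
    by (rule has_derivative_ln[OF normalizer_pos has_derivative_normalizer])
  moreover have "(\<lambda>h. (\<Sum>s\<in>S. exp (f s \<bullet> \<theta>) * (f s \<bullet> h)) * inverse (normalizer \<theta>))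
      = (\<lambda>h. h \<bullet> wmean (prob \<theta>) S f)"
    by (simp add: fun_eq_iff inner_commute[of _ "wmean _ _ _"] inner_wmean_prob divide_inverse)
  ultimately show ?thesis by simp
qed

lemma has_derivative_prob:
  "((\<lambda>\<theta>. prob \<theta> s) has_derivative (\<lambda>h. prob \<theta> s * ((f s - wmean (prob \<theta>) S f) \<bullet> h))) (at \<theta>)"
proof -
  let ?Z = "normalizer \<theta>" and ?D = "\<lambda>h. \<Sum>r\<in>S. exp (f r \<bullet> \<theta>) * (f r \<bullet> h)"
  have "((\<lambda>\<theta>. exp (f s \<bullet> \<theta>) / normalizer \<theta>) has_derivative
     (\<lambda>h. - exp (f s \<bullet> \<theta>) * (inverse ?Z * ?D h * inverse ?Z) + ((f s \<bullet> h) * exp (f s \<bullet> \<theta>)) / ?Z))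
     (at \<theta>)"
    by (intro has_derivative_divide has_derivative_normalizer has_derivative_exp DERIV_exp
        has_derivative_inner_right has_derivative_ident)
      (use normalizer_pos[of \<theta>] in auto)
  moreover have "(\<lambda>h. - exp (f s \<bullet> \<theta>) * (inverse ?Z * ?D h * inverse ?Z) + ((f s \<bullet> h) * exp (f s \<bullet> \<theta>)) / ?Z)
      = (\<lambda>h. prob \<theta> s * ((f s - wmean (prob \<theta>) S f) \<bullet> h))"
    by (simp add: fun_eq_iff prob_def inner_diff_left inner_wmean_prob divide_inverse algebra_simps)
  ultimately show ?thesis unfolding prob_def[abs_def] by simp
qed

lemma has_derivative_wmean_prob:
  "((\<lambda>\<theta>. wmean (prob \<theta>) S f) has_derivative (\<lambda>h. wcov (prob \<theta>) S f *v h)) (at \<theta>)"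
proof -
  have "((\<lambda>\<theta>. \<Sum>s\<in>S. prob \<theta> s *\<^sub>R f s) has_derivative
      (\<lambda>h. \<Sum>s\<in>S. (prob \<theta> s * ((f s - wmean (prob \<theta>) S f) \<bullet> h)) *\<^sub>R f s)) (at \<theta>)"
    by (intro has_derivative_sum has_derivative_scaleR_left has_derivative_prob)
  then show ?thesis
    by (simp add: wmean_def[symmetric] prob_weights.wcov_mult_vec[OF prob_weights])
qed

lemma neg_ln_prob: "- ln (prob \<theta> y) = ln (normalizer \<theta>) - f y \<bullet> \<theta>"
  using normalizer_pos[of \<theta>] by (simp add: prob_def ln_div)

lemma grad_neg_ln_prob: "grad (\<lambda>\<theta>. - ln (prob \<theta> y)) \<theta> = wmean (prob \<theta>) S f - f y"
proof (rule grad_eqI)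
  have "((\<lambda>\<theta>. ln (normalizer \<theta>) - f y \<bullet> \<theta>) has_derivative
      (\<lambda>h. h \<bullet> wmean (prob \<theta>) S f - f y \<bullet> h)) (at \<theta>)"
    by (intro has_derivative_diff has_derivative_ln_normalizer has_derivative_inner_right
        has_derivative_ident)
  then show "GDERIV (\<lambda>\<theta>. - ln (prob \<theta> y)) \<theta> :> wmean (prob \<theta>) S f - f y"
    unfolding gderiv_def neg_ln_prob by (simp add: inner_diff_right inner_commute)
qed

lemma hess_neg_ln_prob: "hess (\<lambda>\<theta>. - ln (prob \<theta> y)) \<theta> = wcov (prob \<theta>) S f"
proof (rule hess_eqI)
  have "((\<lambda>\<theta>. wmean (prob \<theta>) S f - f y) has_derivative (\<lambda>h. wcov (prob \<theta>) S f *v h - 0)) (at \<theta>)"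
    by (intro has_derivative_diff has_derivative_wmean_prob has_derivative_const)
  then show "((\<lambda>\<theta>. grad (\<lambda>\<theta>. - ln (prob \<theta> y)) \<theta>) has_derivative (\<lambda>h. wcov (prob \<theta>) S f *v h)) (at \<theta>)"
    by (simp add: grad_neg_ln_prob)
qed

end

lemma mnl_prob_eq_softmax:
  fixes Sr :: "'s::finite \<Rightarrow> 'a \<Rightarrow> 's set"
  assumes "Sr s a \<noteq> {}"
  shows "softmax (Sr s a)" "mnl_prob Sr phi s a = softmax.prob (Sr s a) (phi s a)"
proof -
  show "softmax (Sr s a)" using assms by unfold_locales auto
  then show "mnl_prob Sr phi s a = softmax.prob (Sr s a) (phi s a)"
    by (simp add: fun_eq_iff mnl_prob_def softmax.prob_def softmax.normalizer_def)
qed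

lemma prob_weights_mnl_prob:
  fixes Sr :: "'s::finite \<Rightarrow> 'a \<Rightarrow> 's set"
  assumes "Sr s a \<noteq> {}"
  shows "prob_weights (Sr s a) (mnl_prob Sr phi s a \<theta>)"
  using softmax.prob_weights[OF mnl_prob_eq_softmax(1)[of Sr s a, OF assms]]
    mnl_prob_eq_softmax(2)[of Sr s a phi, OF assms]
  by simp

lemma hess_mnl_loss:
  fixes Sr :: "'s::finite \<Rightarrow> 'a \<Rightarrow> 's set"
  assumes "st (Suc t) \<in> Sr (st t) (ac t)"
  shows "hess (mnl_loss Sr phi st ac t) \<theta>
    = wcov (mnl_prob Sr phi (st t) (ac t) \<theta>) (Sr (st t) (ac t)) (phi (st t) (ac t))"
proof -
  have nonempty: "Sr (st t) (ac t) \<noteq> {}" using assms by auto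
  interpret softmax "Sr (st t) (ac t)" "phi (st t) (ac t)"
    using mnl_prob_eq_softmax(1)[of Sr "st t" "ac t"] nonempty by simp
  note prob = mnl_prob_eq_softmax(2)[of Sr "st t" "ac t" phi, OF nonempty]
  have "mnl_loss Sr phi st ac t = (\<lambda>\<theta>. - ln (prob \<theta> (st (Suc t))))"
    using assms by (simp add: fun_eq_iff mnl_loss_def prob if_distrib[where f="\<lambda>c. c * _"]
        sum.delta cong: if_cong)
  then show ?thesis
    by (simp add: prob hess_neg_ln_prob)
qed

section \<open>The online mirror descent estimator\<close>

lemma Sigma_Suc_0: "Sigma Sr phi st ac L\<theta> lam \<eta> (Suc 0) = lam *\<^sub>R mat 1"
  by (simp add: Sigma_def)

lemma Sigma_Suc:
  fixes Sr :: "'s::finite \<Rightarrow> 'a \<Rightarrow> 's set"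
  assumes "st (Suc t) \<in> Sr (st t) (ac t)" "1 \<le> t"
  shows "Sigma Sr phi st ac L\<theta> lam \<eta> (Suc t) = Sigma Sr phi st ac L\<theta> lam \<eta> t
    + wcov (mnl_prob Sr phi (st t) (ac t) (theta_hat Sr phi st ac L\<theta> lam \<eta> (Suc t)))
        (Sr (st t) (ac t)) (phi (st t) (ac t))"
proof -
  have "Sigma Sr phi st ac L\<theta> lam \<eta> (Suc t) = Sigma Sr phi st ac L\<theta> lam \<eta> t
      + hess (mnl_loss Sr phi st ac t) (theta_hat Sr phi st ac L\<theta> lam \<eta> (Suc t))"
    using assms(2) by (cases t) (auto simp: Sigma_def theta_hat_def Let_def)
  then show ?thesis by (simp add: hess_mnl_loss[of st t Sr ac, OF assms(1)])
qed

lemma arg_min_on_mem: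
  fixes F :: "'a::topological_space \<Rightarrow> real"
  assumes "compact B" "B \<noteq> {}" "continuous_on B F"
  shows "arg_min_on F B \<in> B"
proof -
  obtain x where "x \<in> B" "\<forall>y\<in>B. F x \<le> F y" using continuous_attains_inf[OF assms] by blast
  then have "is_arg_min F (\<lambda>x. x \<in> B) x" by (auto simp: is_arg_min_def not_less)
  then have "is_arg_min F (\<lambda>x. x \<in> B) (arg_min_on F B)"
    unfolding arg_min_on_def arg_min_def by (rule someI)
  then show ?thesis by (simp add: is_arg_min_def)
qed

lemma norm_theta_hat_le:
  fixes phi :: "'s \<Rightarrow> 'a \<Rightarrow> 's \<Rightarrow> real^'d"
  assumes "0 \<le> L\<theta>"
  shows "norm (theta_hat Sr phi st ac L\<theta> lam \<eta> (Suc t)) \<le> L\<theta>"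
proof (cases t)
  case 0
  then show ?thesis using assms by (simp add: theta_hat_def)
next
  case (Suc k)
  define \<theta>k where "\<theta>k = fst (mnl_est Sr phi st ac L\<theta> lam \<eta> k)"
  define lt where "lt = mnl_loss Sr phi st ac (Suc k)"
  define M where "M = snd (mnl_est Sr phi st ac L\<theta> lam \<eta> k) + \<eta> *\<^sub>R hess lt \<theta>k"
  define F where "F = (\<lambda>\<theta>. grad lt \<theta>k \<bullet> (\<theta> - \<theta>k) + 1 / (2 * \<eta>) * wnorm2 M (\<theta> - \<theta>k))"
  have "theta_hat Sr phi st ac L\<theta> lam \<eta> (Suc t) = arg_min_on F (cball 0 L\<theta>)"
    by (simp add: Suc theta_hat_def Let_def F_def M_def lt_def \<theta>k_def cball_def dist_norm)
  moreover have "arg_min_on F (cball 0 L\<theta>) \<in> cball 0 L\<theta>"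
    using assms unfolding F_def wnorm2_def
    by (intro arg_min_on_mem continuous_intros
        bounded_linear.continuous_on[OF matrix_vector_mul_bounded_linear]) auto
  ultimately show ?thesis by simp
qed

lemma ln_bound_le_Ucard:
  fixes Sr :: "'s::finite \<Rightarrow> 'a::finite \<Rightarrow> 's set"
  assumes "Sr s a \<noteq> {}" "0 < c"
  shows "ln (1 + real T * L^2 / c) \<le> ln (1 + real T * real (Ucard Sr) * L^2 / c)"
proof -
  have range: "{card (Sr s a) | s a. True} = (\<lambda>(s, a). card (Sr s a)) ` UNIV" by auto
  have "card (Sr s a) \<le> Ucard Sr"
    unfolding Ucard_def range by (rule Max_ge) auto
  moreover have "1 \<le> card (Sr s a)" using assms(1) by (simp add: Suc_le_eq card_gt_0_iff)
  ultimately have "real T * L^2 * 1 \<le> real T * L^2 * real (Ucard Sr)"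
    by (intro mult_left_mono) auto
  then show ?thesis
    using assms(2) by (intro ln_mono add_left_mono divide_right_mono) (auto simp: mult_ac add_pos_nonneg)
qed

section \<open>Covariance designs\<close>

locale covariance_design =
  fixes S :: "nat \<Rightarrow> 's set" and f :: "nat \<Rightarrow> 's \<Rightarrow> real^'d" and w :: "nat \<Rightarrow> 's \<Rightarrow> real"
    and \<Sigma> :: "nat \<Rightarrow> real^'d^'d" and lam L :: real
  assumes weights: "prob_weights (S t) (w t)"
    and nonempty: "S t \<noteq> {}"
    and norm_le: "s \<in> S t \<Longrightarrow> norm (f t s) \<le> L"
    and lam_pos: "0 < lam"
    and L_sq_le_lam: "L^2 \<le> lam"
    and \<Sigma>_1: "\<Sigma> 1 = lam *\<^sub>R mat 1"
    and \<Sigma>_Suc: "1 \<le> t \<Longrightarrow> \<Sigma> (Suc t) = \<Sigma> t + wcov (w t) (S t) (f t)"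
begin

abbreviation centered :: "nat \<Rightarrow> 's \<Rightarrow> real^'d" where
  "centered t s \<equiv> f t s - wmean (w t) (S t) (f t)"

sublocale rank_one_updates \<Sigma> S "\<lambda>t s. sqrt (w t s) *\<^sub>R centered t s" lam
  using lam_pos \<Sigma>_1 \<Sigma>_Suc prob_weights.finite_S[OF weights]
  by unfold_locales (simp_all add: prob_weights.wcov_eq_sum_outer[OF weights])

theorem sum_weighted_wnorm2_centered_le:
  "(\<Sum>t=1..T. \<Sum>s\<in>S t. w t s * wnorm2 (matrix_inv (\<Sigma> t)) (centered t s))
    \<le> 2 * CARD('d) * ln (1 + real T * L^2 / (lam * CARD('d)))"
proof -
  have "(\<Sum>s\<in>S t. norm (sqrt (w t s) *\<^sub>R centered t s) ^ 2)
      = (\<Sum>s\<in>S t. w t s * norm (centered t s) ^ 2)" for t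
    using prob_weights.nonneg[OF weights] by (intro sum.cong refl) (simp add: power_mult_distrib)
  also have "\<dots> t \<le> L^2" for t
    by (intro prob_weights.sum_weighted_norm_centered_le[OF weights] norm_le)
  finally have "(\<Sum>t=1..T. potential t) \<le> 2 * CARD('d) * ln (1 + real T * L^2 / (lam * CARD('d)))"
    using L_sq_le_lam by (intro sum_potential_le)
  moreover have "potential t = (\<Sum>s\<in>S t. w t s * wnorm2 (matrix_inv (\<Sigma> t)) (centered t s))" for t
    using prob_weights.nonneg[OF weights] by (intro sum.cong refl) simp
  ultimately show ?thesis by simp
qed

text \<open>Jensen's inequality for the convex quadratic form bounds the mean by the maximum, and
  (a - b)^T M (a - b) \<le> 2 a^T M a + 2 b^T M b.\<close>
lemma max_wnorm2_centered_le:
  assumes "1 \<le> t"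
  shows "Max ((\<lambda>s. wnorm2 (matrix_inv (\<Sigma> t)) (centered t s)) ` S t)
    \<le> 4 * Max ((\<lambda>s. wnorm2 (matrix_inv (\<Sigma> t)) (f t s)) ` S t)"
proof -
  define M where "M = matrix_inv (\<Sigma> t)"
  define m where "m = Max ((\<lambda>s. wnorm2 M (f t s)) ` S t)"
  have M: "pos_semidef M"
    unfolding M_def by (intro pos_def_imp_pos_semidef pos_def_matrix_inv pos_def_A assms)
  have finite: "finite (S t)" by (rule prob_weights.finite_S[OF weights])
  have le_m: "wnorm2 M (f t s) \<le> m" if "s \<in> S t" for s
    unfolding m_def using finite that by (intro Max_ge) auto
  have "wnorm2 M (wmean (w t) (S t) (f t)) \<le> (\<Sum>s\<in>S t. w t s * wnorm2 M (f t s))"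
    by (rule prob_weights.wnorm2_wmean_le[OF weights M])
  also have "\<dots> \<le> (\<Sum>s\<in>S t. w t s * m)"
    using le_m prob_weights.nonneg[OF weights] by (intro sum_mono mult_left_mono) auto
  finally have mean_le: "wnorm2 M (wmean (w t) (S t) (f t)) \<le> m"
    by (simp add: prob_weights.sum_weighted_const[OF weights])
  show ?thesis
    unfolding M_def[symmetric] m_def[symmetric]
  proof (rule Max.boundedI)
    show "finite ((\<lambda>s. wnorm2 M (centered t s)) ` S t)" using finite by simp
    show "(\<lambda>s. wnorm2 M (centered t s)) ` S t \<noteq> {}" using nonempty by simp
    fix a assume "a \<in> (\<lambda>s. wnorm2 M (centered t s)) ` S t"
    then obtain s where s: "s \<in> S t" "a = wnorm2 M (centered t s)" by auto
    show "a \<le> 4 * m"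
      using wnorm2_diff_le[OF M, of "f t s" "wmean (w t) (S t) (f t)"] le_m[OF s(1)] mean_le s(2)
      by linarith
  qed
qed


context
  fixes \<kappa> :: real and T :: nat
  assumes kappa_pos: "0 < \<kappa>"
    and zero_feature: "\<And>t. t \<in> {1..T} \<Longrightarrow> \<exists>s0\<in>S t. f t s0 = 0"
    and kappa_le: "\<And>t s s'. t \<in> {1..T} \<Longrightarrow> s \<in> S t \<Longrightarrow> s' \<in> S t \<Longrightarrow> \<kappa> \<le> w t s * w t s'"
begin

lemma kappa_le_1: "t \<in> {1..T} \<Longrightarrow> \<kappa> \<le> 1"
  using nonempty[of t] kappa_le prob_weights.weight_le_1[OF weights] prob_weights.nonneg[OF weights]
  by (meson all_not_in_conv mult_le_one order_trans)

lemma kappa_inner_sq_le_wcov: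
  assumes "t \<in> {1..T}" "s \<in> S t"
  shows "\<kappa> * (f t s \<bullet> v)^2 \<le> wnorm2 (wcov (w t) (S t) (f t)) v"
proof -
  obtain s0 where s0: "s0 \<in> S t" "f t s0 = 0" using zero_feature[OF assms(1)] by blast
  have "\<kappa> * (f t s \<bullet> v)^2 \<le> w t s * w t s0 * (f t s \<bullet> v)^2"
    using kappa_le[OF assms s0(1)] by (simp add: mult_right_mono)
  also have "\<dots> \<le> wnorm2 (wcov (w t) (S t) (f t)) v"
    using prob_weights.wnorm2_wcov_ge[of "S t" "w t" s s0 "f t"] weights assms(2) s0 by blast
  finally show ?thesis .
qed

text \<open>The comparison matrices V receive only the rank-one updates \<kappa> f f^T along the
  selected features, so they stay below \<Sigma>, and their elliptical potential bounds the
  selected features under \<Sigma>.\<close>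
lemma sum_wnorm2_selected_le:
  assumes sel: "\<And>t. sel t \<in> S t"
  shows "(\<Sum>t=1..T. wnorm2 (matrix_inv (\<Sigma> t)) (f t (sel t)))
    \<le> 2 * CARD('d) / \<kappa> * ln (1 + real T * L^2 / (lam * CARD('d)))"
proof -
  define x where "x t s = sqrt \<kappa> *\<^sub>R f t s" for t s
  define V where "V t = lam *\<^sub>R mat 1 + (\<Sum>i\<in>{1..<t}. outer (x i (sel i)) (x i (sel i)))" for t
  interpret V: rank_one_updates V "\<lambda>t. {sel t}" x lam
    using lam_pos by unfold_locales (auto simp: V_def atLeastLessThanSuc add.assoc add.commute)
  have V_le: "wnorm2 (V t) v \<le> wnorm2 (\<Sigma> t) v" if "1 \<le> t" "t \<le> T" for t v
    using that
  proof (induction t rule: nat_induct_at_least)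
    case base
    then show ?case by (simp add: V.A_Suc_0 A_Suc_0)
  next
    case (Suc t)
    then have "(x t (sel t) \<bullet> v)^2 \<le> wnorm2 (wcov (w t) (S t) (f t)) v"
      using kappa_inner_sq_le_wcov[OF _ sel] kappa_pos by (simp add: x_def power_mult_distrib)
    then show ?case
      using Suc by (simp add: V.A_Suc \<Sigma>_Suc wnorm2_outer)
  qed
  have x_bounded: "(\<Sum>j\<in>{sel t}. norm (x t j) ^ 2) \<le> L^2" if "t \<in> {1..T}" for t
  proof -
    have "norm (f t (sel t)) ^ 2 \<le> L^2" using norm_le[OF sel] by (simp add: power_mono)
    then have "\<kappa> * norm (f t (sel t)) ^ 2 \<le> 1 * L^2"
      using kappa_le_1[OF that] by (intro mult_mono) auto
    then show ?thesis using kappa_pos by (simp add: x_def power_mult_distrib)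
  qed
  have "(\<Sum>t=1..T. wnorm2 (matrix_inv (\<Sigma> t)) (f t (sel t))) \<le> (\<Sum>t=1..T. V.potential t) / \<kappa>"
    unfolding sum_divide_distrib[where A="{1..T}"]
  proof (intro sum_mono)
    fix t assume "t \<in> {1..T}"
    then have "wnorm2 (matrix_inv (\<Sigma> t)) (f t (sel t)) \<le> 1 * wnorm2 (matrix_inv (V t)) (f t (sel t))"
      using V_le by (intro wnorm2_matrix_inv_antimono V.pos_def_A pos_def_invertible pos_def_A) auto
    then show "wnorm2 (matrix_inv (\<Sigma> t)) (f t (sel t)) \<le> V.potential t / \<kappa>"
      using kappa_pos by (simp add: x_def)
  qed
  also have "\<dots> \<le> 2 * CARD('d) / \<kappa> * ln (1 + real T * L^2 / (lam * CARD('d)))"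
    using V.sum_potential_le[OF x_bounded L_sq_le_lam] kappa_pos by (simp add: divide_right_mono)
  finally show ?thesis .
qed

lemma sum_max_wnorm2_le:
  "(\<Sum>t=1..T. Max ((\<lambda>s. wnorm2 (matrix_inv (\<Sigma> t)) (f t s)) ` S t))
    \<le> 2 * CARD('d) / \<kappa> * ln (1 + real T * L^2 / (lam * CARD('d)))"
proof -
  have "\<exists>s\<in>S t. Max ((\<lambda>s. wnorm2 (matrix_inv (\<Sigma> t)) (f t s)) ` S t) = wnorm2 (matrix_inv (\<Sigma> t)) (f t s)" for t
    by (metis (no_types, lifting) Max_in finite_imageI image_iff image_is_empty nonempty
        prob_weights.finite_S weights)
  then obtain sel where "\<And>t. sel t \<in> S t"
    "\<And>t. Max ((\<lambda>s. wnorm2 (matrix_inv (\<Sigma> t)) (f t s)) ` S t) = wnorm2 (matrix_inv (\<Sigma> t)) (f t (sel t))"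
    by metis
  then show ?thesis using sum_wnorm2_selected_le by simp
qed

lemma sum_max_wnorm2_centered_le:
  "(\<Sum>t=1..T. Max ((\<lambda>s. wnorm2 (matrix_inv (\<Sigma> t)) (centered t s)) ` S t))
    \<le> 8 * CARD('d) / \<kappa> * ln (1 + real T * L^2 / (lam * CARD('d)))"
proof -
  have "(\<Sum>t=1..T. Max ((\<lambda>s. wnorm2 (matrix_inv (\<Sigma> t)) (centered t s)) ` S t))
      \<le> 4 * (\<Sum>t=1..T. Max ((\<lambda>s. wnorm2 (matrix_inv (\<Sigma> t)) (f t s)) ` S t))"
    unfolding sum_distrib_left by (intro sum_mono max_wnorm2_centered_le) simp
  then show ?thesis using sum_max_wnorm2_le by simp
qed

end

end

theorem lemma27:
  fixes Sr :: "'s::finite \<Rightarrow> 'a::finite \<Rightarrow> 's set"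
    and phi :: "'s \<Rightarrow> 'a \<Rightarrow> 's \<Rightarrow> real^'d"
    and st :: "nat \<Rightarrow> 's" and ac :: "nat \<Rightarrow> 'a"
    and \<theta>star :: "real^'d"
    and L\<phi> L\<theta> \<kappa> lam \<eta> :: real and T :: nat
  assumes A1_phi: "\<And>s a s'. norm (phi s a s') \<le> L\<phi>"
    and A1_theta: "norm \<theta>star \<le> L\<theta>"
    and A2: "\<And>t s' s'' \<theta>. t \<in> {1..T} \<Longrightarrow> s' \<in> Sr (st t) (ac t) \<Longrightarrow> s'' \<in> Sr (st t) (ac t) \<Longrightarrow>
              norm \<theta> \<le> L\<theta> \<Longrightarrow>
              mnl_prob Sr phi (st t) (ac t) \<theta> s' * mnl_prob Sr phi (st t) (ac t) \<theta> s'' \<ge> \<kappa>"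
    and kappa: "0 < \<kappa>" "\<kappa> < 1"
    and A3: "\<And>s a. \<exists>s'\<in>Sr s a. phi s a s' = 0"
    and traj: "\<And>t. st (Suc t) \<in> Sr (st t) (ac t)"
    and eta: "\<eta> > 0"
    and lam_pos: "lam > 0"
    and lam: "lam \<ge> L\<phi>\<^sup>2"
  defines "d \<equiv> real CARD('d)"
    and "p \<equiv> \<lambda>t s'. mnl_prob Sr phi (st t) (ac t) (theta_hat Sr phi st ac L\<theta> lam \<eta> (Suc t)) s'"
    and "\<Sigma>inv \<equiv> \<lambda>t. matrix_inv (Sigma Sr phi st ac L\<theta> lam \<eta> t)"
    and "phihat \<equiv> \<lambda>t s'. phi (st t) (ac t) s'
                  - (\<Sum>s''\<in>Sr (st t) (ac t).
                      mnl_prob Sr phi (st t) (ac t) (theta_hat Sr phi st ac L\<theta> lam \<eta> (Suc t)) s''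
                        *\<^sub>R phi (st t) (ac t) s'')"
    and "B \<equiv> ln (1 + real T * real (Ucard Sr) * L\<phi>\<^sup>2 / (lam * real CARD('d)))"
  shows "((\<Sum>t=1..T. Max ((\<lambda>s'. wnorm2 (\<Sigma>inv t) (phi (st t) (ac t) s')) ` Sr (st t) (ac t)))
           \<le> 2 * d / \<kappa> * B)
    \<and> ((\<Sum>t=1..T. \<Sum>s'\<in>Sr (st t) (ac t). p t s' * wnorm2 (\<Sigma>inv t) (phihat t s')) \<le> 2 * d * B)
    \<and> ((\<Sum>t=1..T. Max ((\<lambda>s'. wnorm2 (\<Sigma>inv t) (phihat t s')) ` Sr (st t) (ac t)))
           \<le> 8 * d / \<kappa> * B)"
proof -
  have reachable_nonempty: "Sr s a \<noteq> {}" for s a using A3 by blast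
  interpret covariance_design "\<lambda>t. Sr (st t) (ac t)" "\<lambda>t. phi (st t) (ac t)" p
    "Sigma Sr phi st ac L\<theta> lam \<eta>" lam L\<phi>
    unfolding p_def
    using prob_weights_mnl_prob[of Sr, OF reachable_nonempty] reachable_nonempty A1_phi lam_pos lam
      Sigma_Suc_0 Sigma_Suc[of st _ Sr ac, OF traj]
    by (intro covariance_design.intro) auto
  have kappa_le: "\<kappa> \<le> p t s * p t s'" if "t \<in> {1..T}" "s \<in> Sr (st t) (ac t)" "s' \<in> Sr (st t) (ac t)"
    for t s s'
  proof -
    have "0 \<le> L\<theta>" using A1_theta norm_ge_zero order_trans by blast
    then show ?thesis using A2[OF that norm_theta_hat_le] by (simp add: p_def)
  qed
  have mono: "c * ln (1 + real T * L\<phi>^2 / (lam * CARD('d))) \<le> c * B" if "0 \<le> c" for c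
    unfolding B_def using ln_bound_le_Ucard[of Sr, OF reachable_nonempty] lam_pos that
    by (intro mult_left_mono) auto
  have phihat: "phihat t s = centered t s" for t s
    by (simp add: phihat_def p_def wmean_def)
  show ?thesis
    unfolding \<Sigma>inv_def phihat d_def
    using order_trans[OF sum_max_wnorm2_le[OF kappa(1) A3 kappa_le] mono]
      order_trans[OF sum_weighted_wnorm2_centered_le mono]
      order_trans[OF sum_max_wnorm2_centered_le[OF kappa(1) A3 kappa_le] mono] kappa(1)
    by simp
qed

end
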